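(* There are $\lambda<1$ and positive constants $A,B$ such that for each $f\in L^1_2(\mathbb{R}^d)$ with $f\ge0$ and all $m,n\ge1$, $$\|\mathcal{L}_{t,n}^mf\|_{L^1_2}\le A\lambda^m\|f\|_{L^1_2}+B\|f\|_{L^1}.$$
   Context: Consider on $\mathbb{R}^d$ the SDE $dX_t=b(X_t)dt+dW_t$, $X_0=x$, with $W$ a standard Brownian motion, $b$ Lipschitz continuous, and $\langle b(x),x\rangle\le R_1-R_2\|x\|^2$ for constants $R_1\in\mathbb{R}$, $R_2>0$. Fix $t>0$; $S_t(x,y)$ is the transition density and $(\mathcal{L}_tf)(y):=\int S_t(x,y)f(x)\,dx$. Fix $x_0\in\mathbb{R}^d$ and a real sequence $u_n\to+\infty$; $B_n:=B(x_0,e^{-u_n})$ and $(\mathcal{L}_{t,n}f)(x):=1_{B_n^c}(x)(\mathcal{L}_tf)(x)$. $\|f\|_{L^1_2}:=\int(1+|x|^2)|f|\,dx$. *)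

theory Defs
  imports "HOL-Probability.Probability"
begin

definition gauss_kernel :: "real \<Rightarrow> 'a::euclidean_space \<Rightarrow> real" where
  "gauss_kernel s y = (2 * pi * s) powr (- real DIM('a) / 2) * exp (- ((norm y)\<^sup>2) / (2 * s))"

definition std_brownian :: "'w measure \<Rightarrow> (real \<Rightarrow> 'w \<Rightarrow> 'a::euclidean_space) \<Rightarrow> bool" where
  "std_brownian M W \<longleftrightarrow> prob_space M \<and>
     (\<forall>\<omega>\<in>space M. W 0 \<omega> = 0) \<and>
     (\<forall>\<omega>\<in>space M. continuous_on {0..} (\<lambda>t. W t \<omega>)) \<and>
     (\<forall>s t. 0 \<le> s \<and> s < t \<longrightarrow>
        distributed M lborel (\<lambda>\<omega>. W t \<omega> - W s \<omega>) (\<lambda>y. ennreal (gauss_kernel (t - s) y))) \<and>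
     (\<forall>ts::real list. sorted ts \<and> (\<forall>\<tau>\<in>set ts. 0 \<le> \<tau>) \<longrightarrow>
        prob_space.indep_vars M (\<lambda>_. borel) (\<lambda>i \<omega>. W (ts ! Suc i) \<omega> - W (ts ! i) \<omega>) {..<length ts - 1})"

definition Lt :: "('a::euclidean_space \<Rightarrow> 'a \<Rightarrow> real) \<Rightarrow> ('a \<Rightarrow> real) \<Rightarrow> 'a \<Rightarrow> real" where
  "Lt S f y = (\<integral>x. S x y * f x \<partial>lborel)"

definition Ltn :: "('a::euclidean_space \<Rightarrow> 'a \<Rightarrow> real) \<Rightarrow> 'a \<Rightarrow> (nat \<Rightarrow> real) \<Rightarrow> nat \<Rightarrow> ('a \<Rightarrow> real) \<Rightarrow> 'a \<Rightarrow> real" where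
  "Ltn S x0 u n f x = indicator (- ball x0 (exp (- u n))) x * Lt S f x"

definition norm_L12 :: "('a::euclidean_space \<Rightarrow> real) \<Rightarrow> ennreal" where
  "norm_L12 f = (\<integral>\<^sup>+x. ennreal ((1 + (norm x)\<^sup>2) * \<bar>f x\<bar>) \<partial>lborel)"

definition norm_L1 :: "('a::euclidean_space \<Rightarrow> real) \<Rightarrow> ennreal" where
  "norm_L1 f = (\<integral>\<^sup>+x. ennreal \<bar>f x\<bar> \<partial>lborel)"

end

theory Submission
  imports Defs
begin

(* Along each path, Y = X - W is differentiable with Y' = b(Y + W). Lipschitz continuity and
   dissipativity of b give (|Y|^2)' <= 2 R1 - R2 |Y|^2 + (L^2/R2) |W|^2, so by Gronwall
   |Y_t|^2 <= exp(-R2 t) |x|^2 + int_0^t (2 R1 + (L^2/R2) |W_r|^2) dr.  Since E |W_r|^2 = O(r),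
   splitting |X_t|^2 <= (1 + eps) |Y_t|^2 + (1 + 1/eps) |W_t|^2 with a suitable eps yields the
   Lyapunov bound  int S_t(x,y) (1 + |y|^2) dy <= lam (1 + |x|^2) + K  with lam < 1.
   By Tonelli this gives, for f >= 0, ||L_{t,n} f||_{L^1_2} <= lam ||f||_{L^1_2} + K ||f||_{L^1}
   and ||L_{t,n} f||_{L^1} <= ||f||_{L^1}, since killing on the ball only decreases L_t f;
   iterating proves the claim with A = 1 and B = K / (1 - lam). *)

lemma two_mult_le_weighted_squares:
  fixes a b c :: real
  assumes "c > 0"
  shows "2 * a * b \<le> c * a\<^sup>2 + b\<^sup>2 / c"
proof -
  have "0 \<le> (c * a - b)\<^sup>2" by simp
  then have "c * (2 * a * b) \<le> c * (c * a\<^sup>2 + b\<^sup>2 / c)"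
    using assms by (simp add: power2_eq_square algebra_simps)
  then show ?thesis using assms by simp
qed

lemma norm_add_square_le:
  fixes y v :: "'a::real_inner"
  assumes "\<epsilon> > 0"
  shows "(norm (y + v))\<^sup>2 \<le> (1 + \<epsilon>) * (norm y)\<^sup>2 + (1 + 1 / \<epsilon>) * (norm v)\<^sup>2"
proof -
  have "(norm (y + v))\<^sup>2 = (norm y)\<^sup>2 + 2 * (y \<bullet> v) + (norm v)\<^sup>2"
    by (simp add: power2_norm_eq_inner inner_add_left inner_add_right inner_commute)
  moreover have "2 * (y \<bullet> v) \<le> 2 * norm y * norm v"
    using norm_cauchy_schwarz[of y v] by simp
  moreover have "2 * norm y * norm v \<le> \<epsilon> * (norm y)\<^sup>2 + (norm v)\<^sup>2 / \<epsilon>"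
    by (rule two_mult_le_weighted_squares[OF assms])
  ultimately show ?thesis by (simp add: algebra_simps)
qed

lemma dissipative_lipschitz_inner_le:
  fixes b :: "'a::real_inner \<Rightarrow> 'a"
  assumes L: "L-lipschitz_on UNIV b" and diss: "\<And>x. b x \<bullet> x \<le> R1 - R2 * (norm x)\<^sup>2" and R2: "R2 > 0"
  shows "2 * (b (y + v) \<bullet> y) \<le> 2 * R1 - R2 * (norm y)\<^sup>2 + L\<^sup>2 / R2 * (norm v)\<^sup>2"
proof -
  have "(b (y + v) - b y) \<bullet> y \<le> norm (b (y + v) - b y) * norm y"
    by (rule norm_cauchy_schwarz)
  also have "\<dots> \<le> L * norm v * norm y"
    using lipschitz_onD[OF L, of "y + v" y] by (intro mult_right_mono) (simp_all add: dist_norm)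
  finally have "2 * ((b (y + v) - b y) \<bullet> y) \<le> 2 * norm y * (L * norm v)"
    by (simp add: algebra_simps)
  also have "\<dots> \<le> R2 * (norm y)\<^sup>2 + (L * norm v)\<^sup>2 / R2"
    by (rule two_mult_le_weighted_squares[OF R2])
  finally show ?thesis
    using diss[of y] by (simp add: inner_diff_left power_mult_distrib algebra_simps)
qed

lemma differential_inequality_exp_decay:
  fixes \<phi> \<phi>' g :: "real \<Rightarrow> real"
  assumes R: "0 \<le> R" and t: "0 \<le> t"
    and deriv: "\<And>s. s \<in> {0..t} \<Longrightarrow> (\<phi> has_real_derivative \<phi>' s) (at s within {0..t})"
    and ineq: "\<And>s. s \<in> {0<..<t} \<Longrightarrow> \<phi>' s \<le> g s - R * \<phi> s"
    and g_cont: "continuous_on {0..t} g" and g_nonneg: "\<And>s. s \<in> {0..t} \<Longrightarrow> 0 \<le> g s"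
  shows "\<phi> t \<le> exp (- R * t) * \<phi> 0 + integral {0..t} g"
proof -
  define G where "G r = exp (R * r) * g r" for r
  have G_cont: "continuous_on {0..t} G"
    unfolding G_def by (intro continuous_intros g_cont)
  define \<psi> where "\<psi> s = exp (R * s) * \<phi> s - integral {0..s} G" for s
  have \<psi>_deriv: "(\<psi> has_real_derivative exp (R * s) * (R * \<phi> s + \<phi>' s) - G s) (at s within {0..t})"
    if s: "s \<in> {0..t}" for s
  proof -
    have "((\<lambda>u. integral {0..u} G) has_real_derivative G s) (at s within {0..t})"
      using integral_has_vector_derivative[OF G_cont s]
      by (simp add: has_real_derivative_iff_has_vector_derivative)
    then show ?thesis
      unfolding \<psi>_def by (auto intro!: derivative_eq_intros deriv[OF s] simp: algebra_simps)
  qed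
  have "\<psi> t \<le> \<psi> 0"
  proof (rule DERIV_nonpos_imp_decreasing_open[OF t])
    show "continuous_on {0..t} \<psi>"
      using \<psi>_deriv by (rule DERIV_continuous_on)
    fix s assume s: "0 < s" "s < t"
    then have "at s within {0..t} = at s" by (simp add: at_within_Icc_at)
    moreover have "exp (R * s) * (R * \<phi> s + \<phi>' s) - G s \<le> 0"
      using ineq[of s] s unfolding G_def by (simp add: distrib_left[symmetric])
    ultimately show "\<exists>y. DERIV \<psi> s :> y \<and> y \<le> 0"
      using \<psi>_deriv[of s] s by auto
  qed
  then have "exp (R * t) * \<phi> t \<le> \<phi> 0 + integral {0..t} G"
    by (simp add: \<psi>_def)
  moreover have "integral {0..t} G \<le> integral {0..t} (\<lambda>r. exp (R * t) * g r)"
  proof (rule integral_le)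
    show "G integrable_on {0..t}"
      using G_cont by (rule integrable_continuous_interval)
    show "(\<lambda>r. exp (R * t) * g r) integrable_on {0..t}"
      by (intro integrable_continuous_interval continuous_on_mult_left g_cont)
    show "G r \<le> exp (R * t) * g r" if "r \<in> {0..t}" for r
      using that R g_nonneg[OF that] unfolding G_def by (intro mult_right_mono) (auto intro: mult_left_mono)
  qed
  ultimately have "exp (R * t) * \<phi> t \<le> \<phi> 0 + exp (R * t) * integral {0..t} g"
    by simp
  then have "exp (- R * t) * (exp (R * t) * \<phi> t) \<le> exp (- R * t) * (\<phi> 0 + exp (R * t) * integral {0..t} g)"
    by (rule mult_left_mono) simp
  then show ?thesis
    by (simp add: distrib_left mult.assoc[symmetric] flip: exp_add)
qed

lemma integral_equation_path_bound:
  fixes b :: "'a::euclidean_space \<Rightarrow> 'a" and xp w :: "real \<Rightarrow> 'a"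
  assumes L: "L-lipschitz_on UNIV b" and diss: "\<And>x. b x \<bullet> x \<le> R1 - R2 * (norm x)\<^sup>2"
    and R2: "R2 > 0" and t: "0 \<le> t"
    and xp_cont: "continuous_on {0..t} xp" and w_cont: "continuous_on {0..t} w"
    and eq: "\<And>s. s \<in> {0..t} \<Longrightarrow> xp s = x + integral {0..s} (\<lambda>r. b (xp r)) + w s"
  shows "(norm (xp t - w t))\<^sup>2
    \<le> exp (- R2 * t) * (norm x)\<^sup>2 + integral {0..t} (\<lambda>r. 2 * R1 + L\<^sup>2 / R2 * (norm (w r))\<^sup>2)"
proof -
  define h where "h r = b (xp r)" for r
  have h_cont: "continuous_on {0..t} h"
    unfolding h_def by (rule continuous_on_compose2[OF lipschitz_on_continuous_on[OF L] xp_cont]) auto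
  define Y where "Y s = x + integral {0..s} h" for s
  have xp_eq: "xp s = Y s + w s" if "s \<in> {0..t}" for s
    using eq[OF that] unfolding Y_def h_def by simp
  have "R1 \<ge> 0"
    using diss[of 0] by simp
  have "((\<lambda>s. Y s \<bullet> Y s) has_real_derivative 2 * (h s \<bullet> Y s)) (at s within {0..t})"
    if s: "s \<in> {0..t}" for s
  proof -
    have "(Y has_vector_derivative h s) (at s within {0..t})"
      unfolding Y_def using integral_has_vector_derivative[OF h_cont s]
      by (auto intro!: derivative_eq_intros)
    then have "((\<lambda>s. Y s \<bullet> Y s) has_derivative (\<lambda>d. Y s \<bullet> (d *\<^sub>R h s) + (d *\<^sub>R h s) \<bullet> Y s))
        (at s within {0..t})"
      unfolding has_vector_derivative_def by (intro has_derivative_inner)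
    then show ?thesis
      unfolding has_field_derivative_def
      by (rule has_derivative_eq_rhs) (auto simp: inner_commute fun_eq_iff)
  qed
  then have "Y t \<bullet> Y t \<le> exp (- R2 * t) * (Y 0 \<bullet> Y 0) + integral {0..t} (\<lambda>r. 2 * R1 + L\<^sup>2 / R2 * (norm (w r))\<^sup>2)"
  proof (rule differential_inequality_exp_decay[OF less_imp_le[OF R2] t])
    show "2 * (h s \<bullet> Y s) \<le> 2 * R1 + L\<^sup>2 / R2 * (norm (w s))\<^sup>2 - R2 * (Y s \<bullet> Y s)"
      if "s \<in> {0<..<t}" for s
      using dissipative_lipschitz_inner_le[OF L diss R2, of "Y s" "w s"] xp_eq[of s] that
      by (simp add: h_def power2_norm_eq_inner)
    show "continuous_on {0..t} (\<lambda>r. 2 * R1 + L\<^sup>2 / R2 * (norm (w r))\<^sup>2)"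
      by (intro continuous_intros w_cont)
    show "0 \<le> 2 * R1 + L\<^sup>2 / R2 * (norm (w s))\<^sup>2" for s
      using \<open>R1 \<ge> 0\<close> R2 by simp
  qed
  then show ?thesis
    using xp_eq[of t] t by (simp add: Y_def power2_norm_eq_inner)
qed

lemma integral_equation_square_bound:
  fixes b :: "'a::euclidean_space \<Rightarrow> 'a" and xp w :: "real \<Rightarrow> 'a"
  assumes L: "L-lipschitz_on UNIV b" and diss: "\<And>x. b x \<bullet> x \<le> R1 - R2 * (norm x)\<^sup>2"
    and R2: "R2 > 0" and t: "0 \<le> t" and \<epsilon>: "\<epsilon> > 0"
    and xp_cont: "continuous_on {0..t} xp" and w_cont: "continuous_on {0..t} w"
    and eq: "\<And>s. s \<in> {0..t} \<Longrightarrow> xp s = x + integral {0..s} (\<lambda>r. b (xp r)) + w s"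
  shows "(norm (xp t))\<^sup>2 \<le> (1 + \<epsilon>) * exp (- R2 * t) * (norm x)\<^sup>2 + (1 + \<epsilon>) * (2 * R1 * t)
     + (1 + \<epsilon>) * (L\<^sup>2 / R2) * integral {0..t} (\<lambda>r. (norm (w r))\<^sup>2) + (1 + 1 / \<epsilon>) * (norm (w t))\<^sup>2"
proof -
  have "integral {0..t} (\<lambda>r. 2 * R1 + L\<^sup>2 / R2 * (norm (w r))\<^sup>2)
      = 2 * R1 * t + L\<^sup>2 / R2 * integral {0..t} (\<lambda>r. (norm (w r))\<^sup>2)"
  proof -
    have "integral {0..t} (\<lambda>r. 2 * R1 + L\<^sup>2 / R2 * (norm (w r))\<^sup>2)
        = integral {0..t} (\<lambda>r. 2 * R1) + integral {0..t} (\<lambda>r. L\<^sup>2 / R2 * (norm (w r))\<^sup>2)"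
      by (intro integral_add integrable_continuous_interval continuous_intros w_cont)
    then show ?thesis
      using t by simp
  qed
  then have "(norm (xp t - w t))\<^sup>2
      \<le> exp (- R2 * t) * (norm x)\<^sup>2 + 2 * R1 * t + L\<^sup>2 / R2 * integral {0..t} (\<lambda>r. (norm (w r))\<^sup>2)"
    using integral_equation_path_bound[OF L diss R2 t xp_cont w_cont eq] by simp
  then have "(1 + \<epsilon>) * (norm (xp t - w t))\<^sup>2 + (1 + 1 / \<epsilon>) * (norm (w t))\<^sup>2
      \<le> (1 + \<epsilon>) * (exp (- R2 * t) * (norm x)\<^sup>2 + 2 * R1 * t + L\<^sup>2 / R2 * integral {0..t} (\<lambda>r. (norm (w r))\<^sup>2))
        + (1 + 1 / \<epsilon>) * (norm (w t))\<^sup>2"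
    using \<epsilon> by simp
  moreover have "(norm (xp t))\<^sup>2 \<le> (1 + \<epsilon>) * (norm (xp t - w t))\<^sup>2 + (1 + 1 / \<epsilon>) * (norm (w t))\<^sup>2"
    using norm_add_square_le[OF \<epsilon>, of "xp t - w t" "w t"] by simp
  ultimately show ?thesis
    by (simp add: algebra_simps)
qed

lemma (in prob_space) nn_integral_distributed_density:
  assumes "distributed M N X f"
  shows "(\<integral>\<^sup>+x. f x \<partial>N) = 1"
  using distributed_nn_integral[OF assms, of "\<lambda>_. 1"] by (simp add: emeasure_space_1)

lemma std_brownian_prob_space: "std_brownian M W \<Longrightarrow> prob_space M"
  by (simp add: std_brownian_def)

lemma std_brownian_distributed:
  assumes BM: "std_brownian M W" and s: "0 < s"
  shows "distributed M lborel (W s) (\<lambda>y. ennreal (gauss_kernel s y))"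
proof -
  have "distributed M lborel (\<lambda>\<omega>. W s \<omega> - W 0 \<omega>) (\<lambda>y. ennreal (gauss_kernel (s - 0) y))"
    using BM s unfolding std_brownian_def by blast
  moreover have "W s \<omega> - W 0 \<omega> = W s \<omega>" if "\<omega> \<in> space M" for \<omega>
    using BM that by (simp add: std_brownian_def)
  ultimately show ?thesis
    by (simp add: distributed_def cong: distr_cong measurable_cong)
qed

lemma std_brownian_measurable:
  assumes BM: "std_brownian M W" and s: "0 \<le> s"
  shows "W s \<in> borel_measurable M"
proof (cases "s = 0")
  case True
  then show ?thesis
    using BM by (simp add: std_brownian_def cong: measurable_cong)
next
  case False
  then show ?thesis
    using std_brownian_distributed[OF BM] s by (simp add: distributed_def)
qed

lemma gauss_kernel_nonneg: "0 \<le> gauss_kernel s y"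
  by (simp add: gauss_kernel_def)

lemma borel_measurable_gauss_kernel [measurable]: "gauss_kernel s \<in> borel_measurable borel"
  unfolding gauss_kernel_def by measurable

lemma gauss_kernel_norm_square_le:
  fixes y :: "'a::euclidean_space"
  assumes s: "0 < s"
  shows "gauss_kernel s y * (norm y)\<^sup>2 \<le> 4 * s * 2 powr (DIM('a) / 2) * gauss_kernel (2 * s) y"
proof -
  define c where "c = (2 * pi * s) powr (- DIM('a) / 2)"
  define z where "z = (norm y)\<^sup>2 / (4 * s)"
  have "z \<ge> 0" and "c > 0"
    using s by (simp_all add: z_def c_def)
  have "2 powr (DIM('a) / 2) * 2 powr (DIM('a) / 2) = (2::real) powr DIM('a)"
    by (simp flip: powr_add)
  then have "2 powr (DIM('a) / 2) * gauss_kernel (2 * s) y = c * exp (- z)"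
    using s unfolding gauss_kernel_def c_def z_def
    by (simp add: powr_mult powr_minus field_simps)
  moreover have "gauss_kernel s y * (norm y)\<^sup>2 = 4 * s * (c * (z * exp (- z)) * exp (- z))"
    using s unfolding gauss_kernel_def c_def z_def by (simp add: field_simps flip: exp_add)
  moreover have "z * exp (- z) \<le> 1"
  proof -
    have "z \<le> exp z"
      using exp_ge_add_one_self[of z] by linarith
    then show ?thesis
      by (simp add: exp_minus field_simps)
  qed
  ultimately show ?thesis
    using s \<open>c > 0\<close> by (simp add: mult_left_le)
qed

text \<open>Rather than computing the Gaussian second moment, \<open>|y|\<^sup>2\<close> is absorbed into the wider
  kernel \<open>gauss_kernel (2 * s)\<close>, whose total mass \<open>1\<close> is read off from the law of \<open>W (2 * s)\<close>.\<close>

lemma std_brownian_second_moment: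
  fixes W :: "real \<Rightarrow> 'w \<Rightarrow> 'a::euclidean_space"
  assumes BM: "std_brownian M W" and s: "0 \<le> s"
  shows "(\<integral>\<^sup>+\<omega>. (norm (W s \<omega>))\<^sup>2 \<partial>M) \<le> 4 * s * 2 powr (DIM('a) / 2)"
proof (cases "s = 0")
  case True
  then show ?thesis
    using BM by (simp add: std_brownian_def cong: nn_integral_cong)
next
  case False
  with s have s: "0 < s" by simp
  have "(\<integral>\<^sup>+\<omega>. (norm (W s \<omega>))\<^sup>2 \<partial>M) = (\<integral>\<^sup>+y. gauss_kernel s y * ennreal ((norm y)\<^sup>2) \<partial>(lborel :: 'a measure))"
    using distributed_nn_integral[OF std_brownian_distributed[OF BM s], of "\<lambda>y. ennreal ((norm y)\<^sup>2)"]
    by simp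
  also have "\<dots> \<le> (\<integral>\<^sup>+y. ennreal (4 * s * 2 powr (DIM('a) / 2)) * gauss_kernel (2 * s) y \<partial>(lborel :: 'a measure))"
    using s gauss_kernel_norm_square_le[OF s]
    by (intro nn_integral_mono) (simp add: gauss_kernel_nonneg flip: ennreal_mult)
  also have "\<dots> = 4 * s * 2 powr (DIM('a) / 2)"
    using prob_space.nn_integral_distributed_density[OF std_brownian_prob_space[OF BM]
        std_brownian_distributed[OF BM, of "2 * s"]] s
    by (subst nn_integral_cmult) simp_all
  finally show ?thesis .
qed

lemma ceiling_grid_ge: "x \<le> real_of_int \<lceil>x * real (Suc i)\<rceil> / real (Suc i)"
proof -
  have "0 < real (Suc i)" by simp
  then show ?thesis
    by (simp only: pos_le_divide_eq) (rule le_of_int_ceiling)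
qed

lemma tendsto_ceiling_grid: "(\<lambda>i. real_of_int \<lceil>x * real (Suc i)\<rceil> / real (Suc i)) \<longlonglongrightarrow> x"
proof (rule tendsto_sandwich[OF always_eventually always_eventually])
  show "\<forall>i. x \<le> real_of_int \<lceil>x * real (Suc i)\<rceil> / real (Suc i)"
    using ceiling_grid_ge by blast
  show "\<forall>i. real_of_int \<lceil>x * real (Suc i)\<rceil> / real (Suc i) \<le> x + inverse (real (Suc i))"
  proof
    fix i
    have "real_of_int \<lceil>x * real (Suc i)\<rceil> / real (Suc i) \<le> (x * real (Suc i) + 1) / real (Suc i)"
      using ceiling_correct[of "x * real (Suc i)"] by (intro divide_right_mono) linarith+
    also have "\<dots> = x + inverse (real (Suc i))"
      by (simp add: field_simps)
    finally show "real_of_int \<lceil>x * real (Suc i)\<rceil> / real (Suc i) \<le> x + inverse (real (Suc i))" .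
  qed
  show "(\<lambda>i. x + inverse (real (Suc i))) \<longlonglongrightarrow> x"
    using tendsto_add[OF tendsto_const LIMSEQ_inverse_real_of_nat, of x] by simp
qed simp

text \<open>A process with continuous paths is jointly measurable: it is the pointwise limit of its
  evaluations on the grids \<open>\<nat> / (i + 1)\<close>, each of which takes countably many time values.
  Times are clipped by \<open>max 0\<close> because \<open>W r\<close> need not be measurable for \<open>r < 0\<close>.\<close>

lemma std_brownian_measurable_pair:
  assumes BM: "std_brownian M W"
  shows "(\<lambda>(\<omega>, r). W (max 0 r) \<omega>) \<in> borel_measurable (M \<Otimes>\<^sub>M lborel)"
proof (rule borel_measurable_LIMSEQ_metric)
  define q where "q i r = real_of_int \<lceil>max 0 r * real (Suc i)\<rceil> / real (Suc i)" for i r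
  have q_nonneg: "0 \<le> q i r" for i r
    using ceiling_grid_ge[of "max 0 r" i] unfolding q_def by linarith
  show "(\<lambda>(\<omega>, r). W (q i r) \<omega>) \<in> borel_measurable (M \<Otimes>\<^sub>M lborel)" for i
  proof -
    have "(\<lambda>p. W (max 0 (real_of_int k / real (Suc i))) (fst p)) \<in> borel_measurable (M \<Otimes>\<^sub>M lborel)" for k
      using std_brownian_measurable[OF BM, of "max 0 (real_of_int k / real (Suc i))"]
      by (intro measurable_compose[OF measurable_fst]) auto
    moreover have "(\<lambda>p. \<lceil>max 0 (snd p) * real (Suc i)\<rceil>) \<in> measurable (M \<Otimes>\<^sub>M lborel) (count_space UNIV)"
      by measurable
    ultimately have "(\<lambda>p. W (max 0 (q i (snd p))) (fst p)) \<in> borel_measurable (M \<Otimes>\<^sub>M lborel)"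
      unfolding q_def by (rule measurable_compose_countable') simp
    then show ?thesis
      using q_nonneg by (simp add: case_prod_beta max_absorb2)
  qed
  show "(\<lambda>i. (case p of (\<omega>, r) \<Rightarrow> W (q i r) \<omega>)) \<longlonglongrightarrow> (case p of (\<omega>, r) \<Rightarrow> W (max 0 r) \<omega>)"
    if p: "p \<in> space (M \<Otimes>\<^sub>M lborel)" for p
  proof -
    obtain \<omega> r where p_eq: "p = (\<omega>, r)" and \<omega>: "\<omega> \<in> space M"
      using p by (cases p) (auto simp: space_pair_measure)
    have cont: "continuous_on {0..} (\<lambda>s. W s \<omega>)"
      using BM \<omega> by (simp add: std_brownian_def)
    have lim: "(\<lambda>i. q i r) \<longlonglongrightarrow> max 0 r"
      unfolding q_def by (rule tendsto_ceiling_grid)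
    have "(\<lambda>i. W (q i r) \<omega>) \<longlonglongrightarrow> W (max 0 r) \<omega>"
      by (rule continuous_on_tendsto_compose[OF cont lim]) (simp_all add: q_nonneg)
    then show ?thesis
      by (simp add: p_eq)
  qed
qed

lemma std_brownian_square_measurable_pair:
  assumes BM: "std_brownian M W"
  shows "(\<lambda>(\<omega>, r). indicator {0..t} r * (norm (W r \<omega>))\<^sup>2) \<in> borel_measurable (M \<Otimes>\<^sub>M lborel)"
proof -
  note std_brownian_measurable_pair[OF BM, measurable]
  have "(\<lambda>(\<omega>, r). indicator {0..t} r * (norm (W r \<omega>))\<^sup>2)
      = (\<lambda>(\<omega>, r). indicator {0..t} r * (norm (W (max 0 r) \<omega>))\<^sup>2)"
    by (auto simp: fun_eq_iff indicator_def)
  also have "\<dots> \<in> borel_measurable (M \<Otimes>\<^sub>M lborel)"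
    by measurable
  finally show ?thesis .
qed

lemma std_brownian_time_integral_moment:
  fixes W :: "real \<Rightarrow> 'w \<Rightarrow> 'a::euclidean_space"
  assumes BM: "std_brownian M W" and t: "0 \<le> t"
  shows "(\<integral>\<^sup>+\<omega>. (\<integral>\<^sup>+r. indicator {0..t} r * (norm (W r \<omega>))\<^sup>2 \<partial>lborel) \<partial>M)
    \<le> 4 * t * 2 powr (DIM('a) / 2) * t"
proof -
  interpret pair_sigma_finite M lborel
    using prob_space_imp_sigma_finite[OF std_brownian_prob_space[OF BM]]
    by (simp add: pair_sigma_finite_def sigma_finite_lborel)
  note std_brownian_square_measurable_pair[OF BM, measurable]
  have "(\<integral>\<^sup>+\<omega>. (\<integral>\<^sup>+r. indicator {0..t} r * (norm (W r \<omega>))\<^sup>2 \<partial>lborel) \<partial>M)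
      = (\<integral>\<^sup>+r. (\<integral>\<^sup>+\<omega>. indicator {0..t} r * (norm (W r \<omega>))\<^sup>2 \<partial>M) \<partial>lborel)"
    by (rule Fubini'[symmetric]) measurable
  also have "\<dots> \<le> (\<integral>\<^sup>+r. ennreal (4 * t * 2 powr (DIM('a) / 2)) * indicator {0..t} r \<partial>lborel)"
  proof (rule nn_integral_mono)
    fix r :: real
    show "(\<integral>\<^sup>+\<omega>. indicator {0..t} r * (norm (W r \<omega>))\<^sup>2 \<partial>M)
        \<le> ennreal (4 * t * 2 powr (DIM('a) / 2)) * indicator {0..t} r"
    proof (cases "r \<in> {0..t}")
      case True
      then have "(\<integral>\<^sup>+\<omega>. (norm (W r \<omega>))\<^sup>2 \<partial>M) \<le> 4 * r * 2 powr (DIM('a) / 2)"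
        by (intro std_brownian_second_moment[OF BM]) simp
      also have "\<dots> \<le> 4 * t * 2 powr (DIM('a) / 2)"
        using True by (intro ennreal_leI mult_right_mono) auto
      finally show ?thesis
        using True by simp
    qed simp
  qed
  also have "\<dots> = 4 * t * 2 powr (DIM('a) / 2) * t"
    using t by (simp add: nn_integral_cmult_indicator ennreal_mult)
  finally show ?thesis .
qed

lemma sde_solution_second_moment:
  fixes b :: "'a::euclidean_space \<Rightarrow> 'a" and W :: "real \<Rightarrow> 'w \<Rightarrow> 'a" and X :: "real \<Rightarrow> 'w \<Rightarrow> 'a"
  assumes L: "L-lipschitz_on UNIV b" and diss: "\<And>x. b x \<bullet> x \<le> R1 - R2 * (norm x)\<^sup>2" and R2: "R2 > 0"
    and BM: "std_brownian M W"
    and X_cont: "\<And>\<omega>. \<omega> \<in> space M \<Longrightarrow> continuous_on {0..} (\<lambda>s. X s \<omega>)"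
    and X_eq: "\<And>\<omega> s. \<omega> \<in> space M \<Longrightarrow> 0 \<le> s \<Longrightarrow> X s \<omega> = x + integral {0..s} (\<lambda>r. b (X r \<omega>)) + W s \<omega>"
    and t: "0 \<le> t" and \<epsilon>: "\<epsilon> > 0"
  shows "(\<integral>\<^sup>+\<omega>. (norm (X t \<omega>))\<^sup>2 \<partial>M)
    \<le> (1 + \<epsilon>) * exp (- R2 * t) * (norm x)\<^sup>2 + (1 + \<epsilon>) * (2 * R1 * t)
      + ((1 + \<epsilon>) * (L\<^sup>2 / R2) * t + (1 + 1 / \<epsilon>)) * (4 * t * 2 powr (DIM('a) / 2))"
proof -
  define c where "c = 4 * t * 2 powr (DIM('a) / 2)"
  define a where "a = (1 + \<epsilon>) * exp (- R2 * t) * (norm x)\<^sup>2 + (1 + \<epsilon>) * (2 * R1 * t)"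
  define c1 where "c1 = (1 + \<epsilon>) * (L\<^sup>2 / R2)"
  define c2 where "c2 = 1 + 1 / \<epsilon>"
  define F where "F \<omega> = (\<integral>\<^sup>+r. indicator {0..t} r * (norm (W r \<omega>))\<^sup>2 \<partial>lborel)" for \<omega>
  have "R1 \<ge> 0"
    using diss[of 0] by simp
  then have nonneg: "0 \<le> a" "0 \<le> c1" "0 \<le> c2" "0 \<le> c"
    using \<epsilon> R2 t by (simp_all add: a_def c1_def c2_def c_def)
  note std_brownian_square_measurable_pair[OF BM, measurable]
  have "(\<lambda>(\<omega>, r). ennreal (indicator {0..t} r * (norm (W r \<omega>))\<^sup>2)) \<in> borel_measurable (M \<Otimes>\<^sub>M lborel)"
    by measurable
  then have F_measurable: "F \<in> borel_measurable M"
    unfolding F_def by (rule lborel.borel_measurable_nn_integral)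
  have pathwise: "ennreal ((norm (X t \<omega>))\<^sup>2) \<le> a + c1 * F \<omega> + c2 * ennreal ((norm (W t \<omega>))\<^sup>2)"
    if \<omega>: "\<omega> \<in> space M" for \<omega>
  proof -
    have "continuous_on {0..} (\<lambda>s. W s \<omega>)"
      using BM \<omega> by (simp add: std_brownian_def)
    then have W_cont: "continuous_on {0..t} (\<lambda>s. W s \<omega>)"
      by (rule continuous_on_subset) auto
    have X_cont': "continuous_on {0..t} (\<lambda>s. X s \<omega>)"
      using X_cont[OF \<omega>] by (rule continuous_on_subset) auto
    define I where "I = integral {0..t} (\<lambda>r. (norm (W r \<omega>))\<^sup>2)"
    have I: "((\<lambda>r. (norm (W r \<omega>))\<^sup>2) has_integral I) {0..t}"
      unfolding I_def by (intro integrable_integral integrable_continuous_interval continuous_intros W_cont)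
    have "ennreal ((norm (X t \<omega>))\<^sup>2) \<le> ennreal (a + c1 * I + c2 * (norm (W t \<omega>))\<^sup>2)"
      using integral_equation_square_bound[OF L diss R2 t \<epsilon> X_cont' W_cont X_eq[OF \<omega>]]
      unfolding a_def c1_def c2_def I_def by (intro ennreal_leI) simp
    also have "\<dots> = a + c1 * F \<omega> + c2 * ennreal ((norm (W t \<omega>))\<^sup>2)"
      using nonneg has_integral_nonneg[OF I] nn_integral_has_integral_lebesgue[OF _ I]
      by (simp add: F_def ennreal_plus ennreal_mult)
    finally show ?thesis .
  qed
  have "(\<integral>\<^sup>+\<omega>. (norm (X t \<omega>))\<^sup>2 \<partial>M) \<le> (\<integral>\<^sup>+\<omega>. a + c1 * F \<omega> + c2 * ennreal ((norm (W t \<omega>))\<^sup>2) \<partial>M)"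
    by (intro nn_integral_mono pathwise)
  also have "\<dots> = a + c1 * (\<integral>\<^sup>+\<omega>. F \<omega> \<partial>M) + c2 * (\<integral>\<^sup>+\<omega>. (norm (W t \<omega>))\<^sup>2 \<partial>M)"
    using F_measurable std_brownian_measurable[OF BM t] std_brownian_prob_space[OF BM]
    by (simp add: nn_integral_add nn_integral_cmult prob_space.emeasure_space_1)
  also have "\<dots> \<le> ennreal a + ennreal c1 * ennreal (c * t) + ennreal c2 * ennreal c"
    using std_brownian_time_integral_moment[OF BM t] std_brownian_second_moment[OF BM t]
    unfolding F_def c_def by (intro add_mono mult_left_mono order_refl) auto
  also have "\<dots> = ennreal (a + c1 * (c * t) + c2 * c)"
    using nonneg t by (simp add: ennreal_plus ennreal_mult)
  also have "a + c1 * (c * t) + c2 * c = a + (c1 * t + c2) * c"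
    by (simp add: algebra_simps)
  finally show ?thesis
    unfolding a_def c1_def c2_def c_def .
qed

lemma ennreal_integral_le_nn_integral:
  fixes f :: "'b \<Rightarrow> real"
  assumes "\<And>x. 0 \<le> f x"
  shows "ennreal (\<integral>x. f x \<partial>M) \<le> (\<integral>\<^sup>+x. f x \<partial>M)"
proof (cases "integrable M f")
  case True
  then show ?thesis using assms by (simp add: nn_integral_eq_integral)
next
  case False
  then show ?thesis by (simp add: not_integrable_integral_eq)
qed

locale lyapunov_kernel =
  fixes S :: "'a::euclidean_space \<Rightarrow> 'a \<Rightarrow> real" and lam K :: real
  assumes kernel_nonneg: "\<And>x y. 0 \<le> S x y"
    and kernel_measurable: "(\<lambda>(x, y). S x y) \<in> borel_measurable borel"
    and sub_markov: "\<And>x. (\<integral>\<^sup>+y. S x y \<partial>lborel) \<le> 1"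
    and drift: "\<And>x. (\<integral>\<^sup>+y. S x y * (1 + (norm y)\<^sup>2) \<partial>lborel) \<le> lam * (1 + (norm x)\<^sup>2) + K"
    and lam: "0 \<le> lam" "lam < 1"
    and K: "0 \<le> K"
begin

lemma kernel_measurable_pair [measurable]: "(\<lambda>(x, y). S x y) \<in> borel_measurable (lborel \<Otimes>\<^sub>M lborel)"
  using kernel_measurable by (simp add: lborel_prod)

context
  fixes f :: "'a \<Rightarrow> real"
  assumes f_measurable [measurable]: "f \<in> borel_measurable lborel" and f_nonneg: "\<And>x. 0 \<le> f x"
begin

lemma Lt_nonneg: "0 \<le> Lt S f y"
  unfolding Lt_def by (rule integral_nonneg_AE) (use kernel_nonneg f_nonneg in auto)

lemma Ltn_nonneg: "0 \<le> Ltn S x0 u n f y"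
  unfolding Ltn_def using Lt_nonneg by simp

lemma Ltn_measurable: "Ltn S x0 u n f \<in> borel_measurable lborel"
proof -
  have "(\<lambda>(y, x). S x y * f x) \<in> borel_measurable (lborel \<Otimes>\<^sub>M lborel)"
    by measurable
  then have "Lt S f \<in> borel_measurable lborel"
    unfolding Lt_def by (intro lborel.borel_measurable_lebesgue_integral) simp
  then show ?thesis
    unfolding Ltn_def by measurable
qed

lemma Ltn_le_nn_integral: "ennreal \<bar>Ltn S x0 u n f y\<bar> \<le> (\<integral>\<^sup>+x. S x y * f x \<partial>lborel)"
proof -
  have "ennreal \<bar>Ltn S x0 u n f y\<bar> \<le> ennreal (Lt S f y)"
    using Lt_nonneg[of y] by (intro ennreal_leI) (auto simp: Ltn_def indicator_def)
  also have "\<dots> \<le> (\<integral>\<^sup>+x. S x y * f x \<partial>lborel)"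
    unfolding Lt_def by (rule ennreal_integral_le_nn_integral) (simp add: kernel_nonneg f_nonneg)
  finally show ?thesis .
qed

lemma norm_L1_Ltn_le: "norm_L1 (Ltn S x0 u n f) \<le> norm_L1 f"
proof -
  have "norm_L1 (Ltn S x0 u n f) \<le> (\<integral>\<^sup>+y. (\<integral>\<^sup>+x. S x y * f x \<partial>lborel) \<partial>lborel)"
    unfolding norm_L1_def by (intro nn_integral_mono Ltn_le_nn_integral)
  also have "\<dots> = (\<integral>\<^sup>+x. (\<integral>\<^sup>+y. S x y * f x \<partial>lborel) \<partial>lborel)"
    by (rule lborel_pair.Fubini') measurable
  also have "\<dots> = (\<integral>\<^sup>+x. f x * (\<integral>\<^sup>+y. S x y \<partial>lborel) \<partial>lborel)"
    using kernel_nonneg f_nonneg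
    by (intro nn_integral_cong) (simp add: nn_integral_cmult[symmetric] ennreal_mult mult.commute)
  also have "\<dots> \<le> (\<integral>\<^sup>+x. f x \<partial>lborel)"
    using sub_markov by (intro nn_integral_mono) (simp add: mult_left_le)
  also have "\<dots> = norm_L1 f"
    unfolding norm_L1_def using f_nonneg by simp
  finally show ?thesis .
qed

lemma norm_L12_Ltn_le: "norm_L12 (Ltn S x0 u n f) \<le> lam * norm_L12 f + K * norm_L1 f"
proof -
  let ?w = "\<lambda>y::'a. ennreal (1 + (norm y)\<^sup>2)"
  have "norm_L12 (Ltn S x0 u n f) = (\<integral>\<^sup>+y. ?w y * \<bar>Ltn S x0 u n f y\<bar> \<partial>lborel)"
    unfolding norm_L12_def by (intro nn_integral_cong) (simp add: ennreal_mult)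
  also have "\<dots> \<le> (\<integral>\<^sup>+y. ?w y * (\<integral>\<^sup>+x. S x y * f x \<partial>lborel) \<partial>lborel)"
    by (intro nn_integral_mono mult_left_mono Ltn_le_nn_integral) auto
  also have "\<dots> = (\<integral>\<^sup>+y. (\<integral>\<^sup>+x. S x y * f x * ?w y \<partial>lborel) \<partial>lborel)"
    by (intro nn_integral_cong) (simp add: nn_integral_cmult[symmetric] mult.commute)
  also have "\<dots> = (\<integral>\<^sup>+x. (\<integral>\<^sup>+y. S x y * f x * ?w y \<partial>lborel) \<partial>lborel)"
    by (rule lborel_pair.Fubini') measurable
  also have "\<dots> = (\<integral>\<^sup>+x. f x * (\<integral>\<^sup>+y. S x y * ?w y \<partial>lborel) \<partial>lborel)"
    using kernel_nonneg f_nonneg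
    by (intro nn_integral_cong) (simp add: nn_integral_cmult[symmetric] ennreal_mult ac_simps)
  also have "\<dots> \<le> (\<integral>\<^sup>+x. f x * ennreal (lam * (1 + (norm x)\<^sup>2) + K) \<partial>lborel)"
    using drift kernel_nonneg by (intro nn_integral_mono mult_left_mono) (simp_all add: ennreal_mult)
  also have "\<dots> = (\<integral>\<^sup>+x. lam * ennreal ((1 + (norm x)\<^sup>2) * \<bar>f x\<bar>) + K * ennreal \<bar>f x\<bar> \<partial>lborel)"
    using f_nonneg lam K
    by (intro nn_integral_cong)
      (simp add: ennreal_mult[symmetric] ennreal_plus[symmetric] algebra_simps del: ennreal_plus)
  also have "\<dots> = lam * norm_L12 f + K * norm_L1 f"
    unfolding norm_L12_def norm_L1_def by (simp add: nn_integral_add nn_integral_cmult)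
  finally show ?thesis .
qed

end

lemma Ltn_iterate:
  assumes "f \<in> borel_measurable lborel" and "\<And>x. 0 \<le> f x"
  shows "(Ltn S x0 u n ^^ m) f \<in> borel_measurable lborel \<and> (\<forall>x. 0 \<le> (Ltn S x0 u n ^^ m) f x) \<and>
    norm_L1 ((Ltn S x0 u n ^^ m) f) \<le> norm_L1 f \<and>
    norm_L12 ((Ltn S x0 u n ^^ m) f) \<le> lam ^ m * norm_L12 f + K / (1 - lam) * norm_L1 f"
proof (induction m)
  case 0
  then show ?case using assms lam K by simp
next
  case (Suc m)
  let ?g = "(Ltn S x0 u n ^^ m) f"
  have g: "?g \<in> borel_measurable lborel" "\<And>x. 0 \<le> ?g x"
    using Suc by auto
  have "norm_L12 (Ltn S x0 u n ?g) \<le> lam * norm_L12 ?g + K * norm_L1 ?g"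
    by (rule norm_L12_Ltn_le[OF g])
  also have "\<dots> \<le> lam * (lam ^ m * norm_L12 f + K / (1 - lam) * norm_L1 f) + K * norm_L1 f"
    using Suc by (intro add_mono mult_left_mono) auto
  also have "\<dots> = lam ^ Suc m * norm_L12 f + K / (1 - lam) * norm_L1 f"
  proof -
    define c where "c = K / (1 - lam)"
    have c: "0 \<le> c" "c = lam * c + K"
      using lam K by (simp_all add: c_def field_simps)
    have "ennreal lam * (ennreal (lam ^ m) * norm_L12 f + ennreal c * norm_L1 f) + ennreal K * norm_L1 f
        = ennreal (lam ^ Suc m) * norm_L12 f + (ennreal (lam * c) + ennreal K) * norm_L1 f"
      using lam c by (simp add: ennreal_mult distrib_left distrib_right mult.assoc add.assoc)
    also have "ennreal (lam * c) + ennreal K = ennreal c"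
      using lam K c by (simp flip: ennreal_plus)
    finally show ?thesis unfolding c_def .
  qed
  moreover have "norm_L1 (Ltn S x0 u n ?g) \<le> norm_L1 f"
    using norm_L1_Ltn_le[OF g] Suc by (blast intro: order_trans)
  ultimately show ?case
    using Ltn_measurable[OF g] Ltn_nonneg[OF g] by simp
qed

end

lemma sde_kernel_lyapunov:
  fixes b :: "'a::euclidean_space \<Rightarrow> 'a" and W :: "real \<Rightarrow> 'w \<Rightarrow> 'a"
    and X :: "'a \<Rightarrow> real \<Rightarrow> 'w \<Rightarrow> 'a" and S :: "'a \<Rightarrow> 'a \<Rightarrow> real"
  assumes L: "L-lipschitz_on UNIV b" and diss: "\<And>x. b x \<bullet> x \<le> R1 - R2 * (norm x)\<^sup>2" and R2: "R2 > 0"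
    and BM: "std_brownian M W"
    and X_cont: "\<And>x \<omega>. \<omega> \<in> space M \<Longrightarrow> continuous_on {0..} (\<lambda>s. X x s \<omega>)"
    and X_eq: "\<And>x \<omega> s. \<omega> \<in> space M \<Longrightarrow> 0 \<le> s \<Longrightarrow>
      X x s \<omega> = x + integral {0..s} (\<lambda>r. b (X x r \<omega>)) + W s \<omega>"
    and t: "0 < t"
    and S_nonneg: "\<And>x y. 0 \<le> S x y"
    and S_dens: "\<And>x. distributed M lborel (X x t) (\<lambda>y. ennreal (S x y))"
  obtains lam K where "0 \<le> lam" "lam < 1" "0 < K"
    "\<And>x. (\<integral>\<^sup>+y. S x y * (1 + (norm y)\<^sup>2) \<partial>lborel) \<le> lam * (1 + (norm x)\<^sup>2) + K"
proof -
  define e where "e = exp (- R2 * t)"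
  have e: "0 < e" "e < 1"
    using R2 t by (simp_all add: e_def)
  define \<epsilon> where "\<epsilon> = (1 - e) / (2 * e)"
  have \<epsilon>: "0 < \<epsilon>" and lam: "(1 + \<epsilon>) * e = (1 + e) / 2"
    using e by (simp_all add: \<epsilon>_def field_simps)
  define C where "C = (1 + \<epsilon>) * (2 * R1 * t)
    + ((1 + \<epsilon>) * (L\<^sup>2 / R2) * t + (1 + 1 / \<epsilon>)) * (4 * t * 2 powr (DIM('a) / 2))"
  have "0 \<le> C"
    using diss[of 0] \<epsilon> R2 t by (simp add: C_def)
  show thesis
  proof (rule that)
    show "0 \<le> (1 + e) / 2" "(1 + e) / 2 < 1" "0 < 1 + C"
      using e \<open>0 \<le> C\<close> by simp_all
    fix x :: 'a
    have P: "prob_space M"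
      by (rule std_brownian_prob_space[OF BM])
    have "(\<integral>\<^sup>+y. S x y * (1 + (norm y)\<^sup>2) \<partial>lborel) = (\<integral>\<^sup>+\<omega>. 1 + (norm (X x t \<omega>))\<^sup>2 \<partial>M)"
      using distributed_nn_integral[OF S_dens, of "\<lambda>y. ennreal (1 + (norm y)\<^sup>2)"]
      by (simp add: S_nonneg ennreal_mult)
    also have "\<dots> = 1 + (\<integral>\<^sup>+\<omega>. (norm (X x t \<omega>))\<^sup>2 \<partial>M)"
      using distributed_measurable[OF S_dens[of x]] P
      by (simp add: ennreal_plus nn_integral_add prob_space.emeasure_space_1)
    also have "\<dots> \<le> 1 + ennreal ((1 + e) / 2 * (norm x)\<^sup>2 + C)"
      using sde_solution_second_moment[OF L diss R2 BM X_cont X_eq less_imp_le[OF t] \<epsilon>, of x, folded e_def]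
      by (simp add: C_def lam add.assoc)
    also have "\<dots> = ennreal (1 + ((1 + e) / 2 * (norm x)\<^sup>2 + C))"
      using e \<open>0 \<le> C\<close> by (simp add: ennreal_plus)
    also have "\<dots> \<le> (1 + e) / 2 * (1 + (norm x)\<^sup>2) + (1 + C)"
      using e by (intro ennreal_leI) (simp add: algebra_simps)
    finally show "(\<integral>\<^sup>+y. S x y * (1 + (norm y)\<^sup>2) \<partial>lborel) \<le> (1 + e) / 2 * (1 + (norm x)\<^sup>2) + (1 + C)" .
  qed
qed

theorem lemma25:
  fixes b :: "'a::euclidean_space \<Rightarrow> 'a" and M :: "'w measure"
    and W :: "real \<Rightarrow> 'w \<Rightarrow> 'a" and X :: "'a \<Rightarrow> real \<Rightarrow> 'w \<Rightarrow> 'a"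
    and S :: "'a \<Rightarrow> 'a \<Rightarrow> real" and t R1 R2 :: real and x0 :: 'a and u :: "nat \<Rightarrow> real"
  assumes lip: "\<exists>C. C-lipschitz_on UNIV b"
    and diss: "\<forall>x. inner (b x) x \<le> R1 - R2 * (norm x)\<^sup>2" and R2: "R2 > 0"
    and BM: "std_brownian M W"
    and sol: "\<forall>x. \<forall>\<omega>\<in>space M. continuous_on {0..} (\<lambda>s. X x s \<omega>) \<and>
               (\<forall>s\<ge>0. X x s \<omega> = x + integral {0..s} (\<lambda>r. b (X x r \<omega>)) + W s \<omega>)"
    and t: "t > 0"
    and S_nonneg: "\<forall>x y. 0 \<le> S x y"
    and S_meas: "(\<lambda>(x, y). S x y) \<in> borel_measurable borel"
    and S_dens: "\<forall>x. distributed M lborel (X x t) (\<lambda>y. ennreal (S x y))"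
    and u: "filterlim u at_top sequentially"
  shows "\<exists>lam A B. 0 \<le> lam \<and> lam < 1 \<and> A > 0 \<and> B > 0 \<and>
    (\<forall>f. f \<in> borel_measurable lborel \<and> (\<forall>x. 0 \<le> f x) \<and> norm_L12 f < \<infinity> \<longrightarrow>
      (\<forall>m n. 1 \<le> m \<and> 1 \<le> n \<longrightarrow>
        norm_L12 ((Ltn S x0 u n ^^ m) f)
          \<le> ennreal (A * lam ^ m) * norm_L12 f + ennreal B * norm_L1 f))"
proof -
  obtain L where L: "L-lipschitz_on UNIV b"
    using lip by blast
  obtain lam K where lam: "0 \<le> lam" "lam < 1" and K_pos: "0 < K"
    and drift: "\<And>x. (\<integral>\<^sup>+y. S x y * (1 + (norm y)\<^sup>2) \<partial>lborel) \<le> lam * (1 + (norm x)\<^sup>2) + K"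
    using sde_kernel_lyapunov[OF L _ R2 BM _ _ t, of R1 X S] diss sol S_nonneg S_dens by auto
  interpret lyapunov_kernel S lam K
  proof
    show "(\<integral>\<^sup>+y. S x y \<partial>lborel) \<le> 1" for x
      using prob_space.nn_integral_distributed_density[OF std_brownian_prob_space[OF BM] S_dens[rule_format]]
      by simp
  qed (use S_nonneg S_meas drift lam K_pos in auto)
  text \<open>The bound holds for all \<open>m\<close> and \<open>n\<close>.\<close>
  show ?thesis
  proof (intro exI conjI allI impI)
    fix f :: "'a \<Rightarrow> real" and m n :: nat
    assume "f \<in> borel_measurable lborel \<and> (\<forall>x. 0 \<le> f x) \<and> norm_L12 f < \<infinity>"
    then show "norm_L12 ((Ltn S x0 u n ^^ m) f) \<le> ennreal (1 * lam ^ m) * norm_L12 f + ennreal (K / (1 - lam)) * norm_L1 f"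
      using Ltn_iterate[of f m x0 u n] by simp
  qed (use lam K_pos in auto)
qed

end
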